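(* Let $\mathcal{H}_A,\mathcal{H}_B$ be finite-dimensional Hilbert spaces and let $\rho_{AB}$ be a density operator on $\mathcal{H}_A\otimes\mathcal{H}_B$. Let $\lambda_1,\dots,\lambda_R>0$ be the operator Schmidt coefficients of $\rho_{AB}$, i.e. $\rho_{AB}/\sqrt{\mathrm{Tr}(\rho_{AB}^2)}=\sum_{i=1}^R\lambda_i\,O_{A,i}\otimes O_{B,i}$ with $\{O_{A,i}\}$ and $\{O_{B,i}\}$ orthonormal families with respect to the Hilbert–Schmidt inner product (so $\sum_i\lambda_i^2=1$). Define the Rényi 2-operator entanglement $S^{(2)}(\rho_{AB})=-\log\big(\sum_{i=1}^R\lambda_i^4\big)$ and the Rényi 2-entropy $R^{(2)}(\rho_{AB})=-\log\big(\mathrm{Tr}(\rho_{AB}^2)\big)$. If $$S^{(2)}(\rho_{AB})>R^{(2)}(\rho_{AB}),$$ then $\rho_{AB}$ is entangled across the bipartition $A$ versus $B$, i.e. it cannot be written as a convex combination $\sum_k\alpha_k\rho_A^{(k)}\otimes\rho_B^{(k)}$ with $\alpha_k\ge0$ and $\rho_A^{(k)},\rho_B^{(k)}$ density operators on $\mathcal{H}_A,\mathcal{H}_B$.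
   Context: The operator Schmidt decomposition of an operator is its Schmidt decomposition as a vector in $\mathrm{End}(\mathcal{H}_A)\otimes\mathrm{End}(\mathcal{H}_B)$ equipped with the Hilbert–Schmidt inner product $\langle X,Y\rangle=\mathrm{Tr}(X^\dagger Y)$; the Schmidt coefficients are unique. *)

theory Defs
  imports "HOL-Analysis.Analysis"
begin

text \<open>Operators on a finite-dimensional Hilbert space with orthonormal basis indexed by a
finite type 'n are represented as complex matrices of type complex^'n^'n.
The tensor product space H_A \<otimes> H_B has basis indexed by 'a \<times> 'b.\<close>

type_synonym 'n op = "complex^'n^'n"

definition adj :: "('n::finite) op \<Rightarrow> 'n op" where
  "adj A = (\<chi> i j. cnj (A $ j $ i))"

definition tr :: "('n::finite) op \<Rightarrow> complex" where
  "tr A = (\<Sum>i\<in>UNIV. A $ i $ i)"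

definition hermitian :: "('n::finite) op \<Rightarrow> bool" where
  "hermitian A \<longleftrightarrow> adj A = A"

definition psd :: "('n::finite) op \<Rightarrow> bool" where
  "psd A \<longleftrightarrow> (\<forall>v :: complex^'n.
     Im (\<Sum>i\<in>UNIV. cnj (v $ i) * (A *v v) $ i) = 0 \<and>
     Re (\<Sum>i\<in>UNIV. cnj (v $ i) * (A *v v) $ i) \<ge> 0)"

definition density_op :: "('n::finite) op \<Rightarrow> bool" where
  "density_op A \<longleftrightarrow> hermitian A \<and> psd A \<and> tr A = 1"

definition kron :: "('a::finite) op \<Rightarrow> ('b::finite) op \<Rightarrow> ('a \<times> 'b) op" where
  "kron A B = (\<chi> p q. A $ fst p $ fst q * B $ snd p $ snd q)"

definition hs :: "('n::finite) op \<Rightarrow> 'n op \<Rightarrow> complex" where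
  "hs X Y = tr (adj X ** Y)"

definition hs_orthonormal :: "nat \<Rightarrow> (nat \<Rightarrow> ('n::finite) op) \<Rightarrow> bool" where
  "hs_orthonormal R F \<longleftrightarrow> (\<forall>i<R. \<forall>j<R. hs (F i) (F j) = (if i = j then 1 else 0))"

definition purity :: "('n::finite) op \<Rightarrow> real" where
  "purity \<rho> = Re (tr (\<rho> ** \<rho>))"

definition op_schmidt_decomp ::
  "(('a::finite) \<times> ('b::finite)) op \<Rightarrow> nat \<Rightarrow> (nat \<Rightarrow> real) \<Rightarrow> (nat \<Rightarrow> 'a op) \<Rightarrow> (nat \<Rightarrow> 'b op) \<Rightarrow> bool"
  where
  "op_schmidt_decomp \<rho> R lam OA OB \<longleftrightarrow>
     (\<forall>i<R. lam i > 0) \<and> hs_orthonormal R OA \<and> hs_orthonormal R OB \<and>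
     (1 / sqrt (purity \<rho>)) *\<^sub>R \<rho> = (\<Sum>i<R. lam i *\<^sub>R kron (OA i) (OB i))"

definition renyi2_op_ent :: "nat \<Rightarrow> (nat \<Rightarrow> real) \<Rightarrow> real" where
  "renyi2_op_ent R lam = - ln (\<Sum>i<R. lam i ^ 4)"

definition renyi2_entropy :: "('n::finite) op \<Rightarrow> real" where
  "renyi2_entropy \<rho> = - ln (purity \<rho>)"

definition separable :: "(('a::finite) \<times> ('b::finite)) op \<Rightarrow> bool" where
  "separable \<rho> \<longleftrightarrow> (\<exists>(K::nat) (\<alpha>::nat \<Rightarrow> real) (\<rho>A::nat \<Rightarrow> 'a op) (\<rho>B::nat \<Rightarrow> 'b op).
      (\<forall>k<K. \<alpha> k \<ge> 0) \<and> (\<Sum>k<K. \<alpha> k) = 1 \<and>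
      (\<forall>k<K. density_op (\<rho>A k) \<and> density_op (\<rho>B k)) \<and>
      \<rho> = (\<Sum>k<K. \<alpha> k *\<^sub>R kron (\<rho>A k) (\<rho>B k)))"

end

theory Submission
  imports Defs
begin

text \<open>For HS-orthonormal families \<open>O\<^sub>A\<^sub>i\<close>, \<open>O\<^sub>B\<^sub>i\<close> the functional
\<open>L X = \<Sum>\<^sub>i \<langle>O\<^sub>A\<^sub>i \<otimes> O\<^sub>B\<^sub>i, X\<rangle>\<close> has modulus at most 1 on every product state
\<open>\<sigma> \<otimes> \<tau>\<close>: it factors as \<open>\<Sum>\<^sub>i \<langle>O\<^sub>A\<^sub>i, \<sigma>\<rangle> \<langle>O\<^sub>B\<^sub>i, \<tau>\<rangle>\<close>, which Cauchy-Schwarz and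
Bessel's inequality bound by \<open>sqrt (Tr \<sigma>\<^sup>2 Tr \<tau>\<^sup>2) \<le> 1\<close>; by convexity the bound extends
to separable states (the realignment criterion). For the Schmidt families of \<open>\<rho>\<close> one has
\<open>L \<rho> = sqrt (Tr \<rho>\<^sup>2) \<Sum>\<^sub>i \<lambda>\<^sub>i\<close>, so separability forces \<open>sqrt (Tr \<rho>\<^sup>2) \<Sum>\<^sub>i \<lambda>\<^sub>i \<le> 1\<close>.
Since \<open>\<Sum>\<^sub>i \<lambda>\<^sub>i\<^sup>2 = 1\<close>, Cauchy-Schwarz applied twice then gives
\<open>Tr \<rho>\<^sup>2 \<le> (\<Sum>\<^sub>i \<lambda>\<^sub>i\<^sup>3)\<^sup>2 \<le> \<Sum>\<^sub>i \<lambda>\<^sub>i\<^sup>4\<close>, contradicting the hypothesis on the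
two Renyi quantities.\<close>

text \<open>The matrix type only carries a real vector space structure, so complex scaling is explicit.\<close>

definition op_scale :: "complex \<Rightarrow> ('n::finite) op \<Rightarrow> 'n op" where
  "op_scale c X = (\<chi> i j. c * X $ i $ j)"

lemma scaleR_eq_op_scale: "r *\<^sub>R X = op_scale (of_real r) X"
  by (simp add: op_scale_def vec_eq_iff scaleR_conv_of_real[where 'a=complex])

lemma hs_eq_sum_entries: "hs X Y = (\<Sum>i\<in>UNIV. \<Sum>j\<in>UNIV. cnj (X $ i $ j) * Y $ i $ j)"
proof -
  have "hs X Y = (\<Sum>j\<in>UNIV. \<Sum>i\<in>UNIV. cnj (X $ i $ j) * Y $ i $ j)"
    unfolding hs_def tr_def adj_def matrix_matrix_mult_def by simp
  also have "\<dots> = (\<Sum>i\<in>UNIV. \<Sum>j\<in>UNIV. cnj (X $ i $ j) * Y $ i $ j)"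
    by (rule sum.swap)
  finally show ?thesis .
qed

lemma hs_add_left: "hs (A + B) C = hs A C + hs B C"
  and hs_add_right: "hs C (A + B) = hs C A + hs C B"
  and hs_diff_left: "hs (A - B) C = hs A C - hs B C"
  and hs_diff_right: "hs C (A - B) = hs C A - hs C B"
  and hs_op_scale_left: "hs (op_scale c A) C = cnj c * hs A C"
  and hs_op_scale_right: "hs C (op_scale c A) = c * hs C A"
  and hs_zero_left: "hs 0 C = 0"
  and hs_zero_right: "hs C 0 = 0"
  by (simp_all add: hs_eq_sum_entries op_scale_def algebra_simps sum.distrib sum_subtractf
      sum_distrib_left)

lemma hs_sum_left: "hs (\<Sum>i\<in>S. F i) C = (\<Sum>i\<in>S. hs (F i) C)"
  and hs_sum_right: "hs C (\<Sum>i\<in>S. F i) = (\<Sum>i\<in>S. hs C (F i))"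
  by (induction S rule: infinite_finite_induct)
     (simp_all add: hs_add_left hs_add_right hs_zero_left hs_zero_right)

lemma hs_cnj: "hs X Y = cnj (hs Y X)"
  by (simp add: hs_eq_sum_entries mult.commute)

lemma cnj_mult_self: "cnj z * z = of_real ((cmod z)\<^sup>2)"
  by (metis complex_norm_square mult.commute)

lemma hs_self: "hs X X = of_real (\<Sum>i\<in>UNIV. \<Sum>j\<in>UNIV. (cmod (X $ i $ j))\<^sup>2)"
  by (simp only: hs_eq_sum_entries cnj_mult_self of_real_sum)

lemma hs_self_Re_nonneg: "0 \<le> Re (hs X X)"
  by (simp add: hs_self sum_nonneg)

lemma hs_self_eq_0_iff: "hs X X = 0 \<longleftrightarrow> X = 0"
  unfolding hs_self of_real_eq_0_iff by (simp add: sum_nonneg_eq_0_iff sum_nonneg vec_eq_iff)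

lemma sum_UNIV_prod:
  "(\<Sum>p\<in>UNIV. g p) = (\<Sum>a\<in>UNIV. \<Sum>b\<in>UNIV. g (a, b))"
  by (simp add: sum.cartesian_product)

lemma hs_kron: "hs (kron A B) (kron C D) = hs A C * hs B D"
proof -
  have "hs (kron A B) (kron C D) = (\<Sum>a\<in>UNIV. \<Sum>b\<in>UNIV. \<Sum>a'\<in>UNIV. \<Sum>b'\<in>UNIV.
      cnj (A $ a $ a' * B $ b $ b') * (C $ a $ a' * D $ b $ b'))"
    by (simp only: hs_eq_sum_entries sum_UNIV_prod kron_def vec_lambda_beta fst_conv snd_conv)
  also have "\<dots> = (\<Sum>a\<in>UNIV. \<Sum>b\<in>UNIV. \<Sum>a'\<in>UNIV. \<Sum>b'\<in>UNIV.
      (cnj (A $ a $ a') * C $ a $ a') * (cnj (B $ b $ b') * D $ b $ b'))"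
    by (intro sum.cong refl) (simp add: mult_ac)
  also have "\<dots> = hs A C * hs B D"
    by (simp only: hs_eq_sum_entries sum_product)
  finally show ?thesis .
qed

lemma hs_orthonormal_hs_combination:
  assumes "hs_orthonormal R F" and "j < R"
  shows "hs (F j) (\<Sum>i<R. op_scale (c i) (F i)) = c j"
proof -
  have "hs (F j) (\<Sum>i<R. op_scale (c i) (F i)) = (\<Sum>i<R. c i * hs (F j) (F i))"
    by (simp add: hs_sum_right hs_op_scale_right)
  also have "\<dots> = (\<Sum>i<R. if i = j then c j else 0)"
    using assms unfolding hs_orthonormal_def by (intro sum.cong) auto
  finally show ?thesis
    using assms(2) by simp
qed

lemma hs_self_orthonormal_combination:
  assumes "hs_orthonormal R F"
  shows "hs (\<Sum>i<R. op_scale (c i) (F i)) (\<Sum>i<R. op_scale (c i) (F i))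
    = of_real (\<Sum>i<R. (cmod (c i))\<^sup>2)"
  using assms
  by (simp add: hs_sum_left hs_op_scale_left hs_orthonormal_hs_combination cnj_mult_self)

lemma hs_orthonormal_bessel:
  assumes "hs_orthonormal R F"
  shows "(\<Sum>i<R. (cmod (hs (F i) X))\<^sup>2) \<le> Re (hs X X)"
proof -
  define c where "c i = hs (F i) X" for i
  define S where "S = (\<Sum>i<R. op_scale (c i) (F i))"
  have SX: "hs S X = of_real (\<Sum>i<R. (cmod (c i))\<^sup>2)"
    by (simp add: S_def c_def hs_sum_left hs_op_scale_left cnj_mult_self)
  have "hs (X - S) (X - S) = hs X X - of_real (\<Sum>i<R. (cmod (c i))\<^sup>2)"
    using hs_self_orthonormal_combination[OF assms, of c, folded S_def] hs_cnj[of X S]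
    by (simp add: hs_diff_left hs_diff_right SX)
  with hs_self_Re_nonneg[of "X - S"] show ?thesis
    by (simp add: c_def)
qed

lemma hs_orthonormal_kron:
  assumes "hs_orthonormal R F" and "hs_orthonormal R G"
  shows "hs_orthonormal R (\<lambda>i. kron (F i) (G i))"
  using assms unfolding hs_orthonormal_def by (simp add: hs_kron)

lemma nonneg_form_2x2_cmod_sq_le:
  fixes a b :: real and c :: complex
  assumes form_nonneg:
    "\<And>x y. 0 \<le> Re (cnj x * (of_real a * x + c * y) + cnj y * (cnj c * x + of_real b * y))"
  shows "(cmod c)\<^sup>2 \<le> a * b"
proof -
  obtain p q where c: "c = Complex p q"
    by (cases c)
  have cmod_c: "(cmod c)\<^sup>2 = p\<^sup>2 + q\<^sup>2"
    by (simp add: c cmod_def)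
  have det_b: "0 \<le> b * (a * b - (p\<^sup>2 + q\<^sup>2))"
    using form_nonneg[of "of_real b" "- cnj c"] by (simp add: c power2_eq_square algebra_simps)
  have det_a: "0 \<le> a * (a * b - (p\<^sup>2 + q\<^sup>2))"
    using form_nonneg[of "- c" "of_real a"] by (simp add: c power2_eq_square algebra_simps)
  have "0 \<le> a" and "0 \<le> b"
    using form_nonneg[of 1 0] form_nonneg[of 0 1] by simp_all
  show ?thesis
  proof (cases "a = 0 \<and> b = 0")
    case True
    have "0 \<le> a + (b - 2) * (p\<^sup>2 + q\<^sup>2)"
      using form_nonneg[of 1 "- cnj c"] by (simp add: c power2_eq_square algebra_simps)
    with True show ?thesis
      unfolding cmod_c by (simp add: add_nonneg_eq_0_iff)
  next
    case False
    with \<open>0 \<le> a\<close> \<open>0 \<le> b\<close> have "0 < a \<or> 0 < b"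
      by auto
    with det_a det_b show ?thesis
      unfolding cmod_c by (auto simp: zero_le_mult_iff)
  qed
qed

lemma sum_UNIV_two_points:
  fixes f :: "'n::finite \<Rightarrow> 'a::comm_monoid_add"
  assumes "i \<noteq> j" and "\<And>l. l \<noteq> i \<Longrightarrow> l \<noteq> j \<Longrightarrow> f l = 0"
  shows "(\<Sum>l\<in>UNIV. f l) = f i + f j"
proof -
  have "(\<Sum>l\<in>UNIV. f l) = (\<Sum>l\<in>{i, j}. f l)"
    using assms(2) by (intro sum.mono_neutral_right) auto
  with assms(1) show ?thesis
    by simp
qed

lemma hermitian_entry: "hermitian A \<Longrightarrow> A $ j $ i = cnj (A $ i $ j)"
  unfolding hermitian_def adj_def by (metis vec_lambda_beta)

lemma hermitian_diag: "hermitian A \<Longrightarrow> A $ i $ i = of_real (Re (A $ i $ i))"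
  using hermitian_entry[of A i i] by (simp add: complex_eq_iff)

lemma hermitian_psd_cmod_entry_sq_le:
  assumes "hermitian A" and "psd A"
  shows "(cmod (A $ i $ j))\<^sup>2 \<le> Re (A $ i $ i) * Re (A $ j $ j)"
proof (cases "i = j")
  case True
  have "cmod (A $ i $ i) = cmod (of_real (Re (A $ i $ i)))"
    by (subst hermitian_diag[OF assms(1)]) (rule refl)
  with True show ?thesis
    by (simp add: power2_eq_square)
next
  case False
  show ?thesis
  proof (rule nonneg_form_2x2_cmod_sq_le)
    fix x y
    define v :: "complex^'a" where "v = (\<chi> l. if l = i then x else if l = j then y else 0)"
    have Av: "(A *v v) $ k = A $ k $ i * x + A $ k $ j * y" for k
      unfolding matrix_vector_mult_def v_def using False by (simp add: sum_UNIV_two_points)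
    have "(\<Sum>k\<in>UNIV. cnj (v $ k) * (A *v v) $ k)
        = cnj x * (A $ i $ i * x + A $ i $ j * y) + cnj y * (A $ j $ i * x + A $ j $ j * y)"
      unfolding Av using False by (simp add: v_def sum_UNIV_two_points)
    moreover have "0 \<le> Re (\<Sum>k\<in>UNIV. cnj (v $ k) * (A *v v) $ k)"
      using assms(2) unfolding psd_def by blast
    ultimately have "0 \<le> Re (cnj x * (A $ i $ i * x + A $ i $ j * y)
        + cnj y * (A $ j $ i * x + A $ j $ j * y))"
      by simp
    then show "0 \<le> Re (cnj x * (of_real (Re (A $ i $ i)) * x + A $ i $ j * y)
        + cnj y * (cnj (A $ i $ j) * x + of_real (Re (A $ j $ j)) * y))"
      by (simp only: hermitian_diag[OF assms(1), symmetric] hermitian_entry[OF assms(1), symmetric])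
  qed
qed

lemma hermitian_hs_self:
  assumes "hermitian A"
  shows "hs A A = of_real (purity A)"
proof -
  have "hs A A = tr (A ** A)"
    using assms unfolding hs_def hermitian_def by simp
  then show ?thesis
    unfolding purity_def by (metis Re_complex_of_real hs_self)
qed

lemma density_op_purity_le_1:
  assumes "density_op A"
  shows "purity A \<le> 1"
proof -
  have A: "hermitian A" "psd A" "tr A = 1"
    using assms unfolding density_op_def by auto
  have "purity A = (\<Sum>i\<in>UNIV. \<Sum>j\<in>UNIV. (cmod (A $ i $ j))\<^sup>2)"
    using hermitian_hs_self[OF A(1)] hs_self[of A] by (metis of_real_eq_iff)
  also have "\<dots> \<le> (\<Sum>i\<in>UNIV. \<Sum>j\<in>UNIV. Re (A $ i $ i) * Re (A $ j $ j))"
    by (intro sum_mono hermitian_psd_cmod_entry_sq_le A)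
  also have "\<dots> = (Re (tr A))\<^sup>2"
    by (simp add: tr_def power2_eq_square sum_product)
  finally show ?thesis
    using A(3) by simp
qed

lemma density_op_purity_pos:
  assumes "density_op A"
  shows "0 < purity A"
proof -
  have "hermitian A" and "tr A = 1"
    using assms unfolding density_op_def by auto
  then have "A \<noteq> 0"
    by (auto simp: tr_def)
  with hs_self_eq_0_iff[of A] hs_self_Re_nonneg[of A] show ?thesis
    by (simp add: hermitian_hs_self[OF \<open>hermitian A\<close>] less_le)
qed

lemma product_state_hs_kron_sum_le:
  assumes "hs_orthonormal R OA" and "hs_orthonormal R OB"
    and "density_op \<sigma>" and "density_op \<tau>"
  shows "cmod (\<Sum>i<R. hs (kron (OA i) (OB i)) (kron \<sigma> \<tau>)) \<le> 1"
proof -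
  let ?a = "\<lambda>i. cmod (hs (OA i) \<sigma>)" and ?b = "\<lambda>i. cmod (hs (OB i) \<tau>)"
  have purity_le: "Re (hs \<omega> \<omega>) \<le> 1" if "density_op \<omega>" for \<omega> :: "'c::finite op"
    using that density_op_purity_le_1[OF that] hermitian_hs_self[of \<omega>]
    unfolding density_op_def by simp
  have "(\<Sum>i<R. ?a i * ?b i)\<^sup>2 \<le> (\<Sum>i<R. (?a i)\<^sup>2) * (\<Sum>i<R. (?b i)\<^sup>2)"
    by (rule Cauchy_Schwarz_ineq_sum)
  also have "\<dots> \<le> 1 * 1"
    using hs_orthonormal_bessel[OF assms(1), of \<sigma>] hs_orthonormal_bessel[OF assms(2), of \<tau>]
      purity_le[OF assms(3)] purity_le[OF assms(4)]
    by (intro mult_mono) (auto intro: sum_nonneg)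
  finally have "(\<Sum>i<R. ?a i * ?b i) \<le> 1"
    by (simp add: power_le_one_iff sum_nonneg)
  moreover have "cmod (\<Sum>i<R. hs (kron (OA i) (OB i)) (kron \<sigma> \<tau>)) \<le> (\<Sum>i<R. ?a i * ?b i)"
    unfolding hs_kron by (rule order_trans[OF norm_sum]) (simp add: norm_mult)
  ultimately show ?thesis
    by linarith
qed

lemma separable_hs_kron_sum_le:
  assumes "separable \<rho>" and "hs_orthonormal R OA" and "hs_orthonormal R OB"
  shows "cmod (\<Sum>i<R. hs (kron (OA i) (OB i)) \<rho>) \<le> 1"
proof -
  define L where "L X = (\<Sum>i<R. hs (kron (OA i) (OB i)) X)" for X :: "('a \<times> 'b) op"
  obtain K :: nat and \<alpha> \<rho>A \<rho>B where \<alpha>: "\<forall>k<K. 0 \<le> \<alpha> k" "(\<Sum>k<K. \<alpha> k) = 1"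
    and states: "\<forall>k<K. density_op (\<rho>A k) \<and> density_op (\<rho>B k)"
    and \<rho>: "\<rho> = (\<Sum>k<K. \<alpha> k *\<^sub>R kron (\<rho>A k) (\<rho>B k))"
    using assms(1) unfolding separable_def by blast
  have "L \<rho> = (\<Sum>i<R. \<Sum>k<K. of_real (\<alpha> k) * hs (kron (OA i) (OB i)) (kron (\<rho>A k) (\<rho>B k)))"
    unfolding L_def \<rho> by (simp only: hs_sum_right scaleR_eq_op_scale hs_op_scale_right)
  also have "\<dots> = (\<Sum>k<K. \<Sum>i<R. of_real (\<alpha> k) * hs (kron (OA i) (OB i)) (kron (\<rho>A k) (\<rho>B k)))"
    by (rule sum.swap)
  also have "\<dots> = (\<Sum>k<K. of_real (\<alpha> k) * L (kron (\<rho>A k) (\<rho>B k)))"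
    unfolding L_def by (simp only: sum_distrib_left)
  finally have "cmod (L \<rho>) \<le> (\<Sum>k<K. cmod (of_real (\<alpha> k) * L (kron (\<rho>A k) (\<rho>B k))))"
    by (simp only: norm_sum)
  also have "\<dots> = (\<Sum>k<K. \<alpha> k * cmod (L (kron (\<rho>A k) (\<rho>B k))))"
    using \<alpha>(1) by (auto simp: norm_mult intro!: sum.cong)
  also have "\<dots> \<le> (\<Sum>k<K. \<alpha> k * 1)"
    using \<alpha>(1) states product_state_hs_kron_sum_le[OF assms(2,3)] unfolding L_def
    by (intro sum_mono mult_left_mono) auto
  finally show ?thesis
    using \<alpha>(2) by (simp add: L_def)
qed

lemma op_schmidt_decomp_expansion:
  assumes "density_op \<rho>" and "op_schmidt_decomp \<rho> R lam OA OB"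
  shows "\<rho> = (\<Sum>i<R. op_scale (of_real (sqrt (purity \<rho>) * lam i)) (kron (OA i) (OB i)))"
proof -
  have "0 < sqrt (purity \<rho>)"
    using density_op_purity_pos[OF assms(1)] by simp
  then have "\<rho> = sqrt (purity \<rho>) *\<^sub>R ((1 / sqrt (purity \<rho>)) *\<^sub>R \<rho>)"
    by simp
  also have "\<dots> = sqrt (purity \<rho>) *\<^sub>R (\<Sum>i<R. lam i *\<^sub>R kron (OA i) (OB i))"
    using assms(2) unfolding op_schmidt_decomp_def by simp
  also have "\<dots> = (\<Sum>i<R. (sqrt (purity \<rho>) * lam i) *\<^sub>R kron (OA i) (OB i))"
    by (simp add: scaleR_sum_right)
  finally show ?thesis
    by (simp only: scaleR_eq_op_scale)
qed

lemma op_schmidt_decomp_sum_sq: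
  assumes "density_op \<rho>" and "op_schmidt_decomp \<rho> R lam OA OB"
  shows "(\<Sum>i<R. (lam i)\<^sup>2) = 1"
proof -
  let ?P = "purity \<rho>"
  have orth: "hs_orthonormal R (\<lambda>i. kron (OA i) (OB i))"
    using assms(2) hs_orthonormal_kron unfolding op_schmidt_decomp_def by blast
  have "of_real ?P = hs \<rho> \<rho>"
    using assms(1) unfolding density_op_def by (simp add: hermitian_hs_self)
  also have "\<dots> = of_real (\<Sum>i<R. (cmod (of_real (sqrt ?P * lam i)))\<^sup>2)"
    by (rule hs_self_orthonormal_combination[OF orth, where c = "\<lambda>i. of_real (sqrt ?P * lam i)",
          folded op_schmidt_decomp_expansion[OF assms]])
  also have "\<dots> = of_real (?P * (\<Sum>i<R. (lam i)\<^sup>2))"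
    using density_op_purity_pos[OF assms(1)]
    by (simp add: power_mult_distrib sum_distrib_left del: of_real_mult)
  finally have "?P = ?P * (\<Sum>i<R. (lam i)\<^sup>2)"
    by (simp only: of_real_eq_iff)
  with density_op_purity_pos[OF assms(1)] show ?thesis
    by simp
qed

lemma op_schmidt_decomp_hs_kron_sum:
  assumes "density_op \<rho>" and "op_schmidt_decomp \<rho> R lam OA OB"
  shows "(\<Sum>i<R. hs (kron (OA i) (OB i)) \<rho>) = of_real (sqrt (purity \<rho>) * (\<Sum>i<R. lam i))"
proof -
  have orth: "hs_orthonormal R (\<lambda>i. kron (OA i) (OB i))"
    using assms(2) hs_orthonormal_kron unfolding op_schmidt_decomp_def by blast
  have "hs (kron (OA j) (OB j)) \<rho> = of_real (sqrt (purity \<rho>) * lam j)" if "j < R" for j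
    by (rule hs_orthonormal_hs_combination[OF orth that,
          where c = "\<lambda>i. of_real (sqrt (purity \<rho>) * lam i)",
          folded op_schmidt_decomp_expansion[OF assms]])
  then show ?thesis
    by (simp add: sum_distrib_left)
qed

lemma sum_power2_sq_le_sum_mult_sum_power3:
  fixes lam :: "'i \<Rightarrow> real"
  assumes nonneg: "\<forall>i\<in>I. 0 \<le> lam i"
  shows "(\<Sum>i\<in>I. (lam i)\<^sup>2)\<^sup>2 \<le> (\<Sum>i\<in>I. lam i) * (\<Sum>i\<in>I. lam i ^ 3)"
proof -
  have "(\<Sum>i\<in>I. sqrt (lam i) * (sqrt (lam i) * lam i))\<^sup>2
      \<le> (\<Sum>i\<in>I. (sqrt (lam i))\<^sup>2) * (\<Sum>i\<in>I. (sqrt (lam i) * lam i)\<^sup>2)"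
    by (rule Cauchy_Schwarz_ineq_sum)
  moreover have "(\<Sum>i\<in>I. sqrt (lam i) * (sqrt (lam i) * lam i)) = (\<Sum>i\<in>I. (lam i)\<^sup>2)"
    and "(\<Sum>i\<in>I. (sqrt (lam i))\<^sup>2) = (\<Sum>i\<in>I. lam i)"
    and "(\<Sum>i\<in>I. (sqrt (lam i) * lam i)\<^sup>2) = (\<Sum>i\<in>I. lam i ^ 3)"
    using nonneg by (auto simp: power2_eq_square power3_eq_cube mult_ac intro!: sum.cong)
  ultimately show ?thesis
    by simp
qed

lemma sq_le_sum_power4:
  fixes lam :: "'i \<Rightarrow> real" and s :: real
  assumes nonneg: "\<forall>i\<in>I. 0 \<le> lam i" and unit: "(\<Sum>i\<in>I. (lam i)\<^sup>2) = 1"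
    and "0 \<le> s" and "s * (\<Sum>i\<in>I. lam i) \<le> 1"
  shows "s\<^sup>2 \<le> (\<Sum>i\<in>I. lam i ^ 4)"
proof -
  have "1 \<le> (\<Sum>i\<in>I. lam i) * (\<Sum>i\<in>I. lam i ^ 3)"
    using sum_power2_sq_le_sum_mult_sum_power3[OF nonneg] unit by simp
  have "0 \<le> (\<Sum>i\<in>I. lam i)" and "0 \<le> (\<Sum>i\<in>I. lam i ^ 3)"
    using nonneg by (simp_all add: sum_nonneg)
  have "s \<le> s * ((\<Sum>i\<in>I. lam i) * (\<Sum>i\<in>I. lam i ^ 3))"
    using \<open>1 \<le> _\<close> \<open>0 \<le> s\<close> by (metis mult_left_mono mult.right_neutral)
  also have "\<dots> = (s * (\<Sum>i\<in>I. lam i)) * (\<Sum>i\<in>I. lam i ^ 3)"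
    by (simp only: mult.assoc)
  also have "\<dots> \<le> (\<Sum>i\<in>I. lam i ^ 3)"
    using assms(3,4) \<open>0 \<le> (\<Sum>i\<in>I. lam i)\<close> \<open>0 \<le> (\<Sum>i\<in>I. lam i ^ 3)\<close>
    by (intro mult_left_le_one_le) simp_all
  finally have "s \<le> (\<Sum>i\<in>I. lam i ^ 3)" .
  moreover have "(\<Sum>i\<in>I. lam i ^ 3)\<^sup>2 \<le> (\<Sum>i\<in>I. lam i ^ 4)"
  proof -
    have "(\<Sum>i\<in>I. lam i * (lam i)\<^sup>2)\<^sup>2 \<le> (\<Sum>i\<in>I. (lam i)\<^sup>2) * (\<Sum>i\<in>I. ((lam i)\<^sup>2)\<^sup>2)"
      by (rule Cauchy_Schwarz_ineq_sum)
    then show ?thesis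
      using unit by (simp add: power3_eq_cube power4_eq_xxxx power2_eq_square mult.assoc)
  qed
  ultimately show ?thesis
    using \<open>0 \<le> s\<close> by (meson order_trans power_mono)
qed

theorem proposition1:
  fixes \<rho> :: "(('a::finite) \<times> ('b::finite)) op"
    and R :: nat and lam :: "nat \<Rightarrow> real"
    and OA :: "nat \<Rightarrow> 'a op" and OB :: "nat \<Rightarrow> 'b op"
  assumes "density_op \<rho>"
    and "op_schmidt_decomp \<rho> R lam OA OB"
    and "renyi2_op_ent R lam > renyi2_entropy \<rho>"
  shows "\<not> separable \<rho>"
proof
  assume "separable \<rho>"
  let ?P = "purity \<rho>"
  have "cmod (\<Sum>i<R. hs (kron (OA i) (OB i)) \<rho>) \<le> 1"
    using separable_hs_kron_sum_le \<open>separable \<rho>\<close> assms(2)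
    unfolding op_schmidt_decomp_def by blast
  then have "sqrt ?P * (\<Sum>i<R. lam i) \<le> 1"
    unfolding op_schmidt_decomp_hs_kron_sum[OF assms(1,2)] norm_of_real by linarith
  moreover have "\<forall>i\<in>{..<R}. 0 \<le> lam i"
    using assms(2) unfolding op_schmidt_decomp_def by (simp add: less_imp_le)
  ultimately have "(sqrt ?P)\<^sup>2 \<le> (\<Sum>i<R. lam i ^ 4)"
    using sq_le_sum_power4 op_schmidt_decomp_sum_sq[OF assms(1,2)] real_sqrt_ge_zero
      density_op_purity_pos[OF assms(1)] by (metis less_imp_le)
  then have "ln ?P \<le> ln (\<Sum>i<R. lam i ^ 4)"
    using density_op_purity_pos[OF assms(1)] by simp
  with assms(3) show False
    unfolding renyi2_op_ent_def renyi2_entropy_def by simp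
qed

end
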